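(* Let $f=z^4+f_2z^2+f_3z+f_4$ with $f_j\in\mathbb{R}[x,y]$ homogeneous of degree $j$ ($j=2,3,4$), and assume $\gcd(f_3,4f_4-f_2^2)=1$. Let $f=\sum_{i=1}^3p_i^2=\sum_{i=1}^3p_i'^2$ be two representations by quadratic forms in $\mathbb{R}[x,y,z]$, with associated invariants $\xi$ and $\xi'$. If $\xi=\xi'$, then the two representations are orthogonally equivalent.
   Context: The invariant $\xi$ of a representation $f=\sum_{i=1}^3p_i^2$: write $p_i=u_iz^2+v_iz+w_i$ with $u_i\in\mathbb{R}$, $v_i,w_i\in\mathbb{R}[x,y]$ homogeneous of degrees $1,2$; then $u=(u_1,u_2,u_3)^t$ is a unit vector; choose $S\in O_3(\mathbb{R})$ with $Su=(1,0,0)^t$ and let $w'_1$ be the first entry of $S(w_1,w_2,w_3)^t$; then $\xi:=2w'_1$, which does not depend on the choice of $S$. Two representations $\sum p_i^2=\sum p_i'^2$ are orthogonally equivalent if there is $S=(s_{ij})\in O_3(\mathbb{R})$ with $p'_j=\sum_i s_{ij}p_i$ for $j=1,2,3$. *)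

theory Defs
  imports "HOL-Analysis.Analysis" "HOL-Computational_Algebra.Polynomial_Factorial" "HOL-Computational_Algebra.Field_as_Ring"
begin

text \<open>Encoding: R[x,y] is represented as real poly poly (outer variable y, inner x);
  R[x,y,z] as real poly poly poly (outer variable z, coefficients in R[x,y]).\<close>

definition hom2 :: "real poly poly \<Rightarrow> nat \<Rightarrow> bool" where
  "hom2 q d \<longleftrightarrow> (\<forall>k i. coeff (coeff q k) i \<noteq> 0 \<longrightarrow> i + k = d)"

definition hom3 :: "real poly poly poly \<Rightarrow> nat \<Rightarrow> bool" where
  "hom3 q d \<longleftrightarrow> (\<forall>m k i. coeff (coeff (coeff q m) k) i \<noteq> 0 \<longrightarrow> i + k + m = d)"

definition ucoeff :: "real poly poly poly \<Rightarrow> real" where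
  "ucoeff q = coeff (coeff (coeff q 2) 0) 0"

definition wcoeff :: "real poly poly poly \<Rightarrow> real poly poly" where
  "wcoeff q = coeff q 0"

text \<open>The invariant xi of a representation p (index 1 of type 3 plays the role of the first coordinate).\<close>
definition xi :: "(3 \<Rightarrow> real poly poly poly) \<Rightarrow> real poly poly" where
  "xi p = (let u = (\<chi> i. ucoeff (p i));
               S = (SOME S :: real^3^3. orthogonal_matrix S \<and> S *v u = axis 1 1)
           in 2 * (\<Sum>j\<in>UNIV. [:[:S $ 1 $ j:]:] * wcoeff (p j)))"

definition orth_equiv :: "(3 \<Rightarrow> real poly poly poly) \<Rightarrow> (3 \<Rightarrow> real poly poly poly) \<Rightarrow> bool" where
  "orth_equiv p p' \<longleftrightarrow> (\<exists>S :: real^3^3. orthogonal_matrix S \<and>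
      (\<forall>j. p' j = (\<Sum>i\<in>UNIV. [:[:[:S $ i $ j:]:]:] * p i)))"

end

theory Submission
  imports Defs
begin

text \<open>Write \<open>p\<^sub>i = u\<^sub>i z\<^sup>2 + (a\<^sub>i x + b\<^sub>i y) z + c\<^sub>i x\<^sup>2 + d\<^sub>i x y + e\<^sub>i y\<^sup>2\<close> and regard
  \<open>u, a, b, c, d, e\<close> as vectors in \<open>\<real>\<^sup>3\<close>. Then \<open>f\<close> and \<open>\<xi>\<close> are functions of their inner
  products, and the two representations are orthogonally equivalent as soon as one orthogonal map
  carries one 6-tuple to the other. After an orthogonal change of coordinates on each side,
  \<open>u = u' = e\<^sub>1\<close>, \<open>a = a'\<close> and \<open>b = b'\<close>, because these vectors have the same Gram data.

  Identify \<open>e\<^sub>1\<^sup>\<bottom>\<close> with \<open>\<complex>\<close> and form \<open>P = \<alpha> + \<beta> t\<close> from \<open>a, b\<close> and \<open>Q = \<gamma> + \<delta> t + \<epsilon> t\<^sup>2\<close>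
  from \<open>c, d, e\<close> (likewise \<open>Q'\<close>). Equality of \<open>f\<^sub>3\<close> says that \<open>X = P Q\<^sup>*\<close> and \<open>Y = P Q'\<^sup>*\<close>
  have the same real part, equality of \<open>f\<^sub>4\<close> and \<open>\<xi>\<close> gives \<open>X X\<^sup>* = Y Y\<^sup>*\<close>, so \<open>Y = X\<close> or
  \<open>Y = X\<^sup>*\<close>. If \<open>Y = X\<close> then \<open>Q = Q'\<close>. If \<open>Y = X\<^sup>*\<close> and \<open>a, b\<close> are parallel, a reflection
  fixing \<open>a, b\<close> maps \<open>Q\<close> to \<open>Q'\<close>; otherwise \<open>P\<close> is coprime to \<open>P\<^sup>*\<close>, hence divides \<open>Q\<close>,
  and then \<open>|\<alpha> x + \<beta> y|\<^sup>2\<close> is a common factor of \<open>f\<^sub>3\<close> and \<open>4 f\<^sub>4 - f\<^sub>2\<^sup>2\<close>.\<close>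

text \<open>Binary forms in \<open>x\<close> (inner variable) and \<open>y\<close> (outer variable), listed by their
  coefficients of \<open>x\<^sup>k, x\<^sup>k\<^sup>-\<^sup>1y, \<dots>, y\<^sup>k\<close>; \<open>tquad u a b c d e\<close> is
  \<open>u z\<^sup>2 + (a x + b y) z + c x\<^sup>2 + d x y + e y\<^sup>2\<close>.\<close>

definition bform1 :: "real \<Rightarrow> real \<Rightarrow> real poly poly" where
  "bform1 a b = [:[:0, a:], [:b:]:]"

definition bform2 :: "real \<Rightarrow> real \<Rightarrow> real \<Rightarrow> real poly poly" where
  "bform2 c d e = [:[:0, 0, c:], [:0, d:], [:e:]:]"

definition bform3 :: "real \<Rightarrow> real \<Rightarrow> real \<Rightarrow> real \<Rightarrow> real poly poly" where
  "bform3 r0 r1 r2 r3 = [:[:0, 0, 0, r0:], [:0, 0, r1:], [:0, r2:], [:r3:]:]"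

definition bform4 :: "real \<Rightarrow> real \<Rightarrow> real \<Rightarrow> real \<Rightarrow> real \<Rightarrow> real poly poly" where
  "bform4 r0 r1 r2 r3 r4 = [:[:0, 0, 0, 0, r0:], [:0, 0, 0, r1:], [:0, 0, r2:], [:0, r3:], [:r4:]:]"

definition tquad :: "real \<Rightarrow> real \<Rightarrow> real \<Rightarrow> real \<Rightarrow> real \<Rightarrow> real \<Rightarrow> real poly poly poly" where
  "tquad u a b c d e = [:bform2 c d e, bform1 a b, [:[:u:]:]:]"

lemmas bform_defs = bform1_def bform2_def bform3_def bform4_def

lemma bform_mult:
  "bform1 a b * bform1 a' b' = bform2 (a * a') (a * b' + b * a') (b * b')"
  "bform1 a b * bform2 c d e = bform3 (a * c) (a * d + b * c) (a * e + b * d) (b * e)"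
  "bform2 c d e * bform1 a b = bform3 (a * c) (a * d + b * c) (a * e + b * d) (b * e)"
  "bform2 c d e * bform2 c' d' e' =
     bform4 (c * c') (c * d' + d * c') (c * e' + d * d' + e * c') (d * e' + e * d') (e * e')"
  "[:[:s:]:] * bform1 a b = bform1 (s * a) (s * b)"
  "[:[:s:]:] * bform2 c d e = bform2 (s * c) (s * d) (s * e)"
  by (simp_all add: bform_defs algebra_simps)

lemma bform_add:
  "bform1 a b + bform1 a' b' = bform1 (a + a') (b + b')"
  "bform2 c d e + bform2 c' d' e' = bform2 (c + c') (d + d') (e + e')"
  "bform3 r0 r1 r2 r3 + bform3 s0 s1 s2 s3 = bform3 (r0 + s0) (r1 + s1) (r2 + s2) (r3 + s3)"
  "bform4 r0 r1 r2 r3 r4 + bform4 s0 s1 s2 s3 s4 =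
     bform4 (r0 + s0) (r1 + s1) (r2 + s2) (r3 + s3) (r4 + s4)"
  by (simp_all add: bform_defs)

lemma bform_diff:
  "bform4 r0 r1 r2 r3 r4 - bform4 s0 s1 s2 s3 s4 =
     bform4 (r0 - s0) (r1 - s1) (r2 - s2) (r3 - s3) (r4 - s4)"
  by (simp add: bform_defs)

lemma bform_numeral_mult:
  "numeral k * bform1 a b = bform1 (numeral k * a) (numeral k * b)"
  "numeral k * bform2 c d e = bform2 (numeral k * c) (numeral k * d) (numeral k * e)"
  "numeral k * bform3 r0 r1 r2 r3 =
     bform3 (numeral k * r0) (numeral k * r1) (numeral k * r2) (numeral k * r3)"
  "numeral k * bform4 r0 r1 r2 r3 r4 =
     bform4 (numeral k * r0) (numeral k * r1) (numeral k * r2) (numeral k * r3) (numeral k * r4)"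
  by (simp_all add: bform_defs numeral_poly)

lemma bform_eq_iff:
  "bform1 a b = bform1 a' b' \<longleftrightarrow> a = a' \<and> b = b'"
  "bform2 c d e = bform2 c' d' e' \<longleftrightarrow> c = c' \<and> d = d' \<and> e = e'"
  "bform3 r0 r1 r2 r3 = bform3 s0 s1 s2 s3 \<longleftrightarrow> r0 = s0 \<and> r1 = s1 \<and> r2 = s2 \<and> r3 = s3"
  "bform4 r0 r1 r2 r3 r4 = bform4 s0 s1 s2 s3 s4 \<longleftrightarrow>
     r0 = s0 \<and> r1 = s1 \<and> r2 = s2 \<and> r3 = s3 \<and> r4 = s4"
  by (auto simp: bform_defs)

lemma bform1_eq_0_iff: "bform1 a b = 0 \<longleftrightarrow> a = 0 \<and> b = 0"
  by (auto simp: bform_defs)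

lemma bform_vanish_at_0:
  "coeff (coeff (bform2 c d e) 0) 0 = 0"
  "coeff (coeff (bform4 r0 r1 r2 r3 r4) 0) 0 = 0"
  by (simp_all add: bform_defs)

lemma coeff_tquad:
  "coeff (coeff (coeff (tquad u a b c d e) m) k) i =
    (if (m, k, i) = (2, 0, 0) then u
     else if (m, k, i) = (1, 0, 1) then a else if (m, k, i) = (1, 1, 0) then b
     else if (m, k, i) = (0, 0, 2) then c else if (m, k, i) = (0, 1, 1) then d
     else if (m, k, i) = (0, 2, 0) then e else 0)"
  by (auto simp: tquad_def bform_defs coeff_pCons split: nat.split)

lemma hom3_2_eq_tquad:
  assumes "hom3 q 2"
  shows "q = tquad (coeff (coeff (coeff q 2) 0) 0)
    (coeff (coeff (coeff q 1) 0) 1) (coeff (coeff (coeff q 1) 1) 0)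
    (coeff (coeff (coeff q 0) 0) 2) (coeff (coeff (coeff q 0) 1) 1) (coeff (coeff (coeff q 0) 2) 0)"
    (is "q = ?t")
proof -
  have "coeff (coeff (coeff q m) k) i = coeff (coeff (coeff ?t m) k) i" for m k i
  proof (cases "i + k + m = 2")
    case True
    then have "m = 2 \<and> k = 0 \<and> i = 0 \<or> m = 1 \<and> k = 0 \<and> i = 1 \<or> m = 1 \<and> k = 1 \<and> i = 0 \<or>
        m = 0 \<and> k = 0 \<and> i = 2 \<or> m = 0 \<and> k = 1 \<and> i = 1 \<or> m = 0 \<and> k = 2 \<and> i = 0"
      by presburger
    then show ?thesis by (elim disjE) (simp_all add: coeff_tquad)
  next
    case False
    then show ?thesis using assms by (auto simp: hom3_def coeff_tquad)
  qed
  then show ?thesis by (intro poly_eqI)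
qed

lemma hom3_2_tquad_vectors:
  assumes "\<And>i. hom3 (p i) 2"
  obtains u a b c d e :: "real^3" where "p = (\<lambda>i. tquad (u$i) (a$i) (b$i) (c$i) (d$i) (e$i))"
proof
  show "p = (\<lambda>i. tquad ((\<chi> i. coeff (coeff (coeff (p i) 2) 0) 0) $ i)
    ((\<chi> i. coeff (coeff (coeff (p i) 1) 0) 1) $ i) ((\<chi> i. coeff (coeff (coeff (p i) 1) 1) 0) $ i)
    ((\<chi> i. coeff (coeff (coeff (p i) 0) 0) 2) $ i) ((\<chi> i. coeff (coeff (coeff (p i) 0) 1) 1) $ i)
    ((\<chi> i. coeff (coeff (coeff (p i) 0) 2) 0) $ i))"
    using hom3_2_eq_tquad[OF assms] by simp
qed

lemma orthogonal_matrix_inner: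
  fixes S :: "real^'n^'n"
  assumes "orthogonal_matrix S"
  shows "(S *v x) \<bullet> (S *v y) = x \<bullet> y"
proof -
  have "orthogonal_transformation (\<lambda>x. S *v x)"
    using assms by (simp add: orthogonal_transformation_matrix)
  then show ?thesis by (simp add: orthogonal_transformation_def)
qed

lemma orthogonal_matrix_transpose_cancel:
  fixes S :: "real^'n^'n"
  assumes "orthogonal_matrix S"
  shows "transpose S *v (S *v x) = x"
  using assms by (metis matrix_vector_mul_assoc matrix_vector_mul_lid orthogonal_matrix_def)

lemma orthogonal_matrix_to_axis:
  fixes u :: "real^'n"
  assumes "norm u = 1"
  obtains S where "orthogonal_matrix S" "S *v u = axis k 1"
proof -
  obtain A where A: "orthogonal_matrix A" "A *v axis k 1 = u"
    using orthogonal_matrix_exists_basis assms by blast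
  show thesis
  proof
    show "orthogonal_matrix (transpose A)" using A(1) by simp
    show "transpose A *v u = axis k 1"
      using orthogonal_matrix_transpose_cancel[OF A(1), of "axis k 1"] A(2) by simp
  qed
qed

lemma orthogonal_to_axis_component:
  fixes S :: "real^'n^'n"
  assumes "orthogonal_matrix S" "S *v u = axis k 1"
  shows "(S *v x) $ k = u \<bullet> x"
proof -
  have "(S *v x) $ k = axis k 1 \<bullet> (S *v x)" by (simp add: inner_axis')
  also have "\<dots> = u \<bullet> x" by (simp flip: assms(2) add: orthogonal_matrix_inner[OF assms(1)])
  finally show ?thesis .
qed

text \<open>The coefficients \<open>f\<^sub>2, f\<^sub>3, f\<^sub>4\<close> of \<open>\<Sum>\<^sub>i p\<^sub>i\<^sup>2\<close> for \<open>p\<^sub>i = tquad u\<^sub>i a\<^sub>i b\<^sub>i c\<^sub>i d\<^sub>i e\<^sub>i\<close>.\<close>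

definition sos_f2 :: "real^3 \<Rightarrow> real^3 \<Rightarrow> real^3 \<Rightarrow> real^3 \<Rightarrow> real^3 \<Rightarrow> real^3 \<Rightarrow> real poly poly" where
  "sos_f2 u a b c d e = bform2 (a \<bullet> a + 2 * (u \<bullet> c)) (2 * (a \<bullet> b) + 2 * (u \<bullet> d)) (b \<bullet> b + 2 * (u \<bullet> e))"

definition sos_f3 :: "real^3 \<Rightarrow> real^3 \<Rightarrow> real^3 \<Rightarrow> real^3 \<Rightarrow> real^3 \<Rightarrow> real poly poly" where
  "sos_f3 a b c d e = bform3 (2 * (a \<bullet> c)) (2 * (a \<bullet> d + b \<bullet> c)) (2 * (a \<bullet> e + b \<bullet> d)) (2 * (b \<bullet> e))"

definition sos_f4 :: "real^3 \<Rightarrow> real^3 \<Rightarrow> real^3 \<Rightarrow> real poly poly" where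
  "sos_f4 c d e = bform4 (c \<bullet> c) (2 * (c \<bullet> d)) (d \<bullet> d + 2 * (c \<bullet> e)) (2 * (d \<bullet> e)) (e \<bullet> e)"

lemmas sos_defs = sos_f2_def sos_f3_def sos_f4_def

lemma sos_orthogonal_invariant:
  assumes "orthogonal_matrix S"
  shows "sos_f2 (S *v u) (S *v a) (S *v b) (S *v c) (S *v d) (S *v e) = sos_f2 u a b c d e"
    "sos_f3 (S *v a) (S *v b) (S *v c) (S *v d) (S *v e) = sos_f3 a b c d e"
    "sos_f4 (S *v c) (S *v d) (S *v e) = sos_f4 c d e"
  by (simp_all add: sos_defs orthogonal_matrix_inner[OF assms])

lemma square_quadratic_poly:
  "([:w, q, t:] :: 'a::comm_ring_1 poly)\<^sup>2 = [:w * w, 2 * (w * q), q * q + 2 * (t * w), 2 * (t * q), t * t:]"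
  by (simp add: power2_eq_square algebra_simps mult_pCons_left mult_pCons_right)

lemma tquad_square:
  "(tquad u a b c d e)\<^sup>2 =
   [:bform4 (c * c) (2 * (c * d)) (d * d + 2 * (c * e)) (2 * (d * e)) (e * e),
     bform3 (2 * (a * c)) (2 * (a * d + b * c)) (2 * (a * e + b * d)) (2 * (b * e)),
     bform2 (a * a + 2 * (u * c)) (2 * (a * b) + 2 * (u * d)) (b * b + 2 * (u * e)),
     bform1 (2 * (u * a)) (2 * (u * b)), [:[:u * u:]:]:]"
  unfolding tquad_def square_quadratic_poly
  by (simp only: bform_mult bform_numeral_mult bform_add) (simp add: bform_eq_iff algebra_simps)

lemma sum_tquad_squares:
  fixes u a b c d e :: "real^3"
  shows "(\<Sum>i\<in>UNIV. (tquad (u$i) (a$i) (b$i) (c$i) (d$i) (e$i))\<^sup>2) =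
    [:sos_f4 c d e, sos_f3 a b c d e, sos_f2 u a b c d e,
      bform1 (2 * (u \<bullet> a)) (2 * (u \<bullet> b)), [:[:u \<bullet> u:]:]:]"
  by (simp add: tquad_square sum_3 bform_add)
    (simp add: sos_defs bform_eq_iff inner_vec_def sum_3 algebra_simps)

lemma sum_tquad_squares_eq_monic_quartic:
  fixes u a b c d e :: "real^3"
  assumes "(\<Sum>i\<in>UNIV. (tquad (u$i) (a$i) (b$i) (c$i) (d$i) (e$i))\<^sup>2) = [:f4, f3, f2, 0, 1:]"
  shows "u \<bullet> u = 1" "u \<bullet> a = 0" "u \<bullet> b = 0"
    "f2 = sos_f2 u a b c d e" "f3 = sos_f3 a b c d e" "f4 = sos_f4 c d e"
  using assms unfolding sum_tquad_squares by (auto simp: bform1_eq_0_iff one_pCons)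

lemma tquad_linear:
  "[:[:[:s:]:]:] * tquad u a b c d e = tquad (s * u) (s * a) (s * b) (s * c) (s * d) (s * e)"
  "tquad u a b c d e + tquad u' a' b' c' d' e' =
     tquad (u + u') (a + a') (b + b') (c + c') (d + d') (e + e')"
  by (simp_all add: tquad_def bform_defs algebra_simps)

lemma sum_const_mult_tquad:
  fixes s u a b c d e :: "real^3"
  shows "(\<Sum>i\<in>UNIV. [:[:[:s$i:]:]:] * tquad (u$i) (a$i) (b$i) (c$i) (d$i) (e$i)) =
    tquad (s \<bullet> u) (s \<bullet> a) (s \<bullet> b) (s \<bullet> c) (s \<bullet> d) (s \<bullet> e)"
  by (simp only: sum_3 tquad_linear) (simp add: inner_vec_def sum_3)

lemma orth_equiv_tquad:
  fixes T :: "real^3^3" and u a b c d e :: "real^3"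
  assumes "orthogonal_matrix T"
  shows "orth_equiv (\<lambda>i. tquad (u$i) (a$i) (b$i) (c$i) (d$i) (e$i))
    (\<lambda>i. tquad ((T *v u)$i) ((T *v a)$i) ((T *v b)$i) ((T *v c)$i) ((T *v d)$i) ((T *v e)$i))"
  unfolding orth_equiv_def
proof (intro exI[of _ "transpose T"] conjI allI)
  show "orthogonal_matrix (transpose T)" using assms by simp
  fix j
  have row: "(\<chi> i. transpose T $ i $ j) \<bullet> x = (T *v x) $ j" for x
    by (simp add: inner_vec_def matrix_vector_mult_def transpose_def)
  show "tquad ((T *v u)$j) ((T *v a)$j) ((T *v b)$j) ((T *v c)$j) ((T *v d)$j) ((T *v e)$j) =
    (\<Sum>i\<in>UNIV. [:[:[:transpose T $ i $ j:]:]:] * tquad (u$i) (a$i) (b$i) (c$i) (d$i) (e$i))"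
    using sum_const_mult_tquad[of "\<chi> i. transpose T $ i $ j"] by (simp add: row)
qed

text \<open>Any \<open>S\<close> with \<open>S u = e\<^sub>1\<close> has \<open>u\<close> as its first row, so \<open>\<xi>\<close> is \<open>2 \<Sum>\<^sub>i u\<^sub>i w\<^sub>i\<close>
  whatever \<open>S\<close> the choice operator picks.\<close>

lemma xi_tquad:
  fixes u a b c d e :: "real^3"
  assumes "u \<bullet> u = 1"
  shows "xi (\<lambda>i. tquad (u$i) (a$i) (b$i) (c$i) (d$i) (e$i)) = 2 * bform2 (u \<bullet> c) (u \<bullet> d) (u \<bullet> e)"
proof -
  have u: "(\<chi> i. ucoeff (tquad (u$i) (a$i) (b$i) (c$i) (d$i) (e$i))) = u"
    by (simp add: ucoeff_def coeff_tquad vec_eq_iff)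
  have w: "wcoeff (tquad u' a' b' c' d' e') = bform2 c' d' e'" for u' a' b' c' d' e'
    by (simp add: wcoeff_def tquad_def)
  have "norm u = 1" using assms by (simp add: norm_eq_1)
  then have "\<exists>S::real^3^3. orthogonal_matrix S \<and> S *v u = axis 1 1"
    by (meson orthogonal_matrix_to_axis)
  define S where "S = (SOME S :: real^3^3. orthogonal_matrix S \<and> S *v u = axis 1 1)"
  have S: "orthogonal_matrix S" "S *v u = axis 1 1"
    using someI_ex[OF \<open>\<exists>S. _\<close>] unfolding S_def by blast+
  have row: "S $ 1 $ j = u $ j" for j
    using orthogonal_to_axis_component[OF S, of "axis j 1"]
    by (simp add: matrix_vector_mult_basis column_def inner_axis)
  have "xi (\<lambda>i. tquad (u$i) (a$i) (b$i) (c$i) (d$i) (e$i)) =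
      2 * (\<Sum>j\<in>UNIV. [:[:S $ 1 $ j:]:] * bform2 (c$j) (d$j) (e$j))"
    unfolding xi_def Let_def u w S_def[symmetric] ..
  also have "\<dots> = 2 * bform2 (u \<bullet> c) (u \<bullet> d) (u \<bullet> e)"
    by (simp only: row sum_3 bform_mult bform_add) (simp add: inner_vec_def sum_3)
  finally show ?thesis .
qed

definition cplane :: "real^3 \<Rightarrow> complex" where
  "cplane x = Complex (x$2) (x$3)"

lemma cplane_simps [simp]:
  "Re (cplane x) = x$2" "Im (cplane x) = x$3" "cplane 0 = 0" "cplane (axis 1 1) = 0"
  by (simp_all add: cplane_def complex_eq_iff axis_def)

lemma inner_real3: "(x::real^3) \<bullet> y = x$1 * y$1 + x$2 * y$2 + x$3 * y$3"
  by (simp add: inner_vec_def sum_3)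

lemma inner_cplane: "(x::real^3) \<bullet> y = x$1 * y$1 + Re (cplane x * cnj (cplane y))"
  by (simp add: inner_real3)

lemma real3_eq_iff: "(x::real^3) = y \<longleftrightarrow> x$1 = y$1 \<and> cplane x = cplane y"
  by (auto simp: vec_eq_iff forall_3 complex_eq_iff)

definition rot_matrix :: "complex \<Rightarrow> real^3^3" where
  "rot_matrix w = vector [vector [1, 0, 0], vector [0, Re w, - Im w], vector [0, Im w, Re w]]"

definition refl_matrix :: "complex \<Rightarrow> real^3^3" where
  "refl_matrix w = vector [vector [1, 0, 0], vector [0, Re w, Im w], vector [0, Im w, - Re w]]"

lemma rot_matrix_apply: "(rot_matrix w *v x) $ 1 = x $ 1" "cplane (rot_matrix w *v x) = w * cplane x"
  by (simp_all add: rot_matrix_def matrix_vector_mult_def sum_3 complex_eq_iff)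

lemma refl_matrix_apply: "(refl_matrix w *v x) $ 1 = x $ 1" "cplane (refl_matrix w *v x) = w * cnj (cplane x)"
  by (simp_all add: refl_matrix_def matrix_vector_mult_def sum_3 complex_eq_iff)

lemma cmod_eq_1_iff: "cmod w = 1 \<longleftrightarrow> Re w * Re w + Im w * Im w = 1"
  by (simp add: cmod_def power2_eq_square)

lemma orthogonal_rot_matrix: "cmod w = 1 \<Longrightarrow> orthogonal_matrix (rot_matrix w)"
  by (simp add: cmod_eq_1_iff orthogonal_matrix vec_eq_iff forall_3 matrix_matrix_mult_def
      transpose_def mat_def sum_3 rot_matrix_def algebra_simps)

lemma orthogonal_refl_matrix: "cmod w = 1 \<Longrightarrow> orthogonal_matrix (refl_matrix w)"
  by (simp add: cmod_eq_1_iff orthogonal_matrix vec_eq_iff forall_3 matrix_matrix_mult_def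
      transpose_def mat_def sum_3 refl_matrix_def algebra_simps)

lemma mult_cnj_eq_1: "cmod w = 1 \<Longrightarrow> w * cnj w = 1"
  by (simp add: complex_mult_cnj cmod_power2[symmetric])

lemma complex_eq_or_cnj_eq:
  assumes "Re z = Re z'" "cmod z = cmod z'"
  shows "z = z' \<or> cnj z = z'"
proof -
  have "(Im z)\<^sup>2 = (Im z')\<^sup>2"
    using assms cmod_power2[of z] cmod_power2[of z'] by simp
  then have "Im z = Im z' \<or> Im z = - Im z'"
    by (simp add: power2_eq_iff)
  then show ?thesis using assms(1) by (auto simp: complex_eq_iff)
qed

lemma unit_multiple_if_same_gram:
  fixes \<alpha> \<beta> \<alpha>' \<beta>' :: complex
  assumes "cmod \<alpha> = cmod \<alpha>'" "cmod \<beta> = cmod \<beta>'" "\<alpha> * cnj \<beta> = \<alpha>' * cnj \<beta>'"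
  shows "\<exists>w. cmod w = 1 \<and> \<alpha>' = w * \<alpha> \<and> \<beta>' = w * \<beta>"
proof (cases "\<alpha> = 0")
  case False
  define w where "w = \<alpha>' / \<alpha>"
  have "\<alpha>' \<noteq> 0" using assms(1) False by auto
  then have w1: "cmod w = 1" using assms(1) False by (simp add: w_def norm_divide)
  have \<alpha>': "\<alpha>' = w * \<alpha>" using False by (simp add: w_def)
  then have "cnj \<beta> = w * cnj \<beta>'" using assms(3) False by (simp add: ac_simps)
  then have "w * \<beta> = (w * cnj w) * \<beta>'"
    by (metis complex_cnj_cnj complex_cnj_mult mult.assoc mult.commute)
  then show ?thesis using w1 \<alpha>' by (auto simp: mult_cnj_eq_1)
next
  case True
  then have "\<alpha>' = 0" using assms(1) by simp
  show ?thesis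
  proof (cases "\<beta> = 0")
    case True
    then show ?thesis using \<open>\<alpha> = 0\<close> \<open>\<alpha>' = 0\<close> assms(2) by (intro exI[of _ 1]) simp
  next
    case False
    moreover have "\<beta>' \<noteq> 0" using False assms(2) by auto
    ultimately show ?thesis using \<open>\<alpha> = 0\<close> \<open>\<alpha>' = 0\<close> assms(2)
      by (intro exI[of _ "\<beta>' / \<beta>"]) (simp add: norm_divide)
  qed
qed

lemma pairs_orthogonal_to_axis1_congruent:
  fixes a b a' b' :: "real^3"
  assumes "a$1 = 0" "b$1 = 0" "a'$1 = 0" "b'$1 = 0"
    and "a \<bullet> a = a' \<bullet> a'" "a \<bullet> b = a' \<bullet> b'" "b \<bullet> b = b' \<bullet> b'"
  obtains R where "orthogonal_matrix R" "R *v axis 1 1 = axis 1 1" "R *v a = a'" "R *v b = b'"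
proof -
  define \<alpha> \<beta> \<alpha>' \<beta>' where "\<alpha> = cplane a" and "\<beta> = cplane b" and "\<alpha>' = cplane a'" and "\<beta>' = cplane b'"
  have cmod_cplane: "cmod (cplane x) = sqrt (x \<bullet> x - x$1 * x$1)" for x
    by (simp add: inner_real3 cmod_def power2_eq_square)
  have n: "cmod \<alpha> = cmod \<alpha>'" "cmod \<beta> = cmod \<beta>'"
    using assms by (simp_all add: \<alpha>_def \<beta>_def \<alpha>'_def \<beta>'_def cmod_cplane)
  have "Re (\<alpha> * cnj \<beta>) = Re (\<alpha>' * cnj \<beta>')"
    using assms(1-4,6) by (simp add: \<alpha>_def \<beta>_def \<alpha>'_def \<beta>'_def inner_cplane)
  moreover have "cmod (\<alpha> * cnj \<beta>) = cmod (\<alpha>' * cnj \<beta>')"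
    using n by (simp add: norm_mult)
  ultimately consider "\<alpha> * cnj \<beta> = \<alpha>' * cnj \<beta>'" | "cnj \<alpha> * cnj (cnj \<beta>) = \<alpha>' * cnj \<beta>'"
    using complex_eq_or_cnj_eq by fastforce
  then show thesis
  proof cases
    case 1
    with n obtain w where "cmod w = 1" "\<alpha>' = w * \<alpha>" "\<beta>' = w * \<beta>"
      using unit_multiple_if_same_gram by blast
    then show thesis using assms(1-4)
      by (intro that[of "rot_matrix w"])
        (simp_all add: orthogonal_rot_matrix real3_eq_iff rot_matrix_apply \<alpha>_def \<beta>_def \<alpha>'_def \<beta>'_def)
  next
    case 2
    with n obtain w where "cmod w = 1" "\<alpha>' = w * cnj \<alpha>" "\<beta>' = w * cnj \<beta>"
      using unit_multiple_if_same_gram[of "cnj \<alpha>" \<alpha>' "cnj \<beta>" \<beta>'] by auto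
    then show thesis using assms(1-4)
      by (intro that[of "refl_matrix w"])
        (simp_all add: orthogonal_refl_matrix real3_eq_iff refl_matrix_apply \<alpha>_def \<beta>_def \<alpha>'_def \<beta>'_def)
  qed
qed

lemma sum_prod_eq_cases:
  fixes X X' Y Y' :: "'a::idom"
  assumes "X + X' = Y + Y'" "X * X' = Y * Y'"
  shows "X = Y \<or> X' = Y"
proof -
  have "(X - Y) * (X' - Y) = X * X' - Y * (X + X') + Y * Y" by (simp add: algebra_simps)
  also have "\<dots> = 0" using assms by (simp add: algebra_simps)
  finally show ?thesis by simp
qed

lemma coprime_no_common_factor_vanishing_at_0:
  fixes x y A :: "real poly poly"
  assumes "gcd x y = 1" "A dvd x" "A dvd y"
  shows "coeff (coeff A 0) 0 \<noteq> 0"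
proof -
  have "is_unit A" using assms by (metis gcd_greatest)
  then show ?thesis by (auto simp: is_unit_poly_iff)
qed

lemma linear_factor_if_conj_mult_eq:
  fixes \<alpha> \<beta> \<gamma> \<delta> \<epsilon> :: complex
  assumes "Im (\<alpha> * cnj \<beta>) \<noteq> 0" "[:cnj \<alpha>, cnj \<beta>:] * [:\<gamma>, \<delta>, \<epsilon>:] = [:\<alpha>, \<beta>:] * R"
  obtains l0 l1 where "[:\<gamma>, \<delta>, \<epsilon>:] = [:\<alpha>, \<beta>:] * [:l0, l1:]"
proof -
  have "\<beta> \<noteq> 0" using assms(1) by auto
  then have prime: "prime_elem [:\<alpha>, \<beta>:]" by (rule prime_elem_linear_field_poly)
  have "\<not> [:\<alpha>, \<beta>:] dvd [:cnj \<alpha>, cnj \<beta>:]"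
  proof
    assume "[:\<alpha>, \<beta>:] dvd [:cnj \<alpha>, cnj \<beta>:]"
    then obtain K where K: "[:cnj \<alpha>, cnj \<beta>:] = [:\<alpha>, \<beta>:] * K" ..
    have "poly [:cnj \<alpha>, cnj \<beta>:] (- \<alpha> / \<beta>) = poly [:\<alpha>, \<beta>:] (- \<alpha> / \<beta>) * poly K (- \<alpha> / \<beta>)"
      by (simp only: K poly_mult)
    also have "\<dots> = 0" using \<open>\<beta> \<noteq> 0\<close> by simp
    finally have "poly [:cnj \<alpha>, cnj \<beta>:] (- \<alpha> / \<beta>) = 0" .
    then have "\<alpha> * cnj \<beta> = cnj (\<alpha> * cnj \<beta>)"
      using \<open>\<beta> \<noteq> 0\<close> by (simp add: field_simps)
    then show False using assms(1) by (metis Reals_cnj_iff complex_is_Real_iff)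
  qed
  moreover have "[:\<alpha>, \<beta>:] dvd [:cnj \<alpha>, cnj \<beta>:] * [:\<gamma>, \<delta>, \<epsilon>:]"
    unfolding assms(2) by (rule dvd_triv_left)
  ultimately have "[:\<alpha>, \<beta>:] dvd [:\<gamma>, \<delta>, \<epsilon>:]"
    using prime_elem_dvd_mult_iff[OF prime] by blast
  then obtain L where L: "[:\<gamma>, \<delta>, \<epsilon>:] = [:\<alpha>, \<beta>:] * L" ..
  have "degree L \<le> 1"
  proof (cases "L = 0")
    case False
    then have "degree [:\<gamma>, \<delta>, \<epsilon>:] = 1 + degree L"
      unfolding L using \<open>\<beta> \<noteq> 0\<close> by (subst degree_mult_eq) auto
    moreover have "degree [:\<gamma>, \<delta>, \<epsilon>:] \<le> 2" by simp
    ultimately show ?thesis by linarith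
  qed simp
  then have "L = [:coeff L 0, coeff L 1:]"
    by (intro poly_eqI) (auto simp: coeff_pCons coeff_eq_0 split: nat.split)
  then show thesis using L by (metis that)
qed

text \<open>If \<open>\<gamma> + \<delta> t + \<epsilon> t\<^sup>2 = (\<alpha> + \<beta> t)(l\<^sub>0 + l\<^sub>1 t)\<close>, then with \<open>N = |\<alpha> x + \<beta> y|\<^sup>2\<close>,
  \<open>l = l\<^sub>0 x + l\<^sub>1 y\<close> and \<open>w = c\<^sub>1 x\<^sup>2 + d\<^sub>1 x y + e\<^sub>1 y\<^sup>2\<close> one has \<open>f\<^sub>3 = 2 N Re l\<close> and
  \<open>4 f\<^sub>4 - f\<^sub>2\<^sup>2 = N (4 |l|\<^sup>2 - N - 4 w)\<close>.\<close>

lemma sos_common_factor: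
  fixes a b c d e :: "real^3" and l0 l1 :: complex
  assumes a1: "a$1 = 0" and b1: "b$1 = 0"
    and factor: "[:cplane c, cplane d, cplane e:] = [:cplane a, cplane b:] * [:l0, l1:]"
  shows "bform2 (a \<bullet> a) (2 * (a \<bullet> b)) (b \<bullet> b) dvd sos_f3 a b c d e"
    "bform2 (a \<bullet> a) (2 * (a \<bullet> b)) (b \<bullet> b) dvd
       4 * sos_f4 c d e - (sos_f2 (axis 1 1) a b c d e)\<^sup>2"
proof -
  have "cplane c = cplane a * l0" "cplane d = cplane a * l1 + cplane b * l0" "cplane e = cplane b * l1"
    using factor by (simp_all add: algebra_simps)
  then have c: "c$2 = a$2 * Re l0 - a$3 * Im l0" "c$3 = a$2 * Im l0 + a$3 * Re l0"
    and d: "d$2 = a$2 * Re l1 - a$3 * Im l1 + (b$2 * Re l0 - b$3 * Im l0)"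
      "d$3 = a$2 * Im l1 + a$3 * Re l1 + (b$2 * Im l0 + b$3 * Re l0)"
    and e: "e$2 = b$2 * Re l1 - b$3 * Im l1" "e$3 = b$2 * Im l1 + b$3 * Re l1"
    by (simp_all add: complex_eq_iff)
  have "sos_f3 a b c d e = bform2 (a \<bullet> a) (2 * (a \<bullet> b)) (b \<bullet> b) * bform1 (2 * Re l0) (2 * Re l1)"
    unfolding sos_f3_def bform_mult bform_eq_iff
    by (simp add: inner_real3 a1 b1 c d e algebra_simps)
  then show "bform2 (a \<bullet> a) (2 * (a \<bullet> b)) (b \<bullet> b) dvd sos_f3 a b c d e" ..
  have "4 * sos_f4 c d e - (sos_f2 (axis 1 1) a b c d e)\<^sup>2 =
      bform2 (a \<bullet> a) (2 * (a \<bullet> b)) (b \<bullet> b) *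
      bform2 (4 * (Re l0 * Re l0 + Im l0 * Im l0) - a \<bullet> a - 4 * c$1)
        (8 * (Re l0 * Re l1 + Im l0 * Im l1) - 2 * (a \<bullet> b) - 4 * d$1)
        (4 * (Re l1 * Re l1 + Im l1 * Im l1) - b \<bullet> b - 4 * e$1)"
    unfolding sos_f2_def sos_f4_def power2_eq_square bform_mult bform_numeral_mult bform_diff
      bform_eq_iff inner_axis'
    by (simp add: inner_real3 a1 b1 c d e algebra_simps)
  then show "bform2 (a \<bullet> a) (2 * (a \<bullet> b)) (b \<bullet> b) dvd
       4 * sos_f4 c d e - (sos_f2 (axis 1 1) a b c d e)\<^sup>2" ..
qed

lemma equal_conj_products_cases:
  fixes \<alpha> \<beta> \<gamma> \<delta> \<epsilon> \<gamma>' \<delta>' \<epsilon>' :: complex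
  defines "P \<equiv> [:\<alpha>, \<beta>:]" and "Pc \<equiv> [:cnj \<alpha>, cnj \<beta>:]"
    and "Q \<equiv> [:\<gamma>, \<delta>, \<epsilon>:]" and "Qc \<equiv> [:cnj \<gamma>, cnj \<delta>, cnj \<epsilon>:]"
    and "R \<equiv> [:\<gamma>', \<delta>', \<epsilon>':]" and "Rc \<equiv> [:cnj \<gamma>', cnj \<delta>', cnj \<epsilon>':]"
  assumes "P \<noteq> 0" and sum: "P * Qc + Pc * Q = P * Rc + Pc * R" and norm: "Q * Qc = R * Rc"
  obtains "\<gamma>' = \<gamma>" "\<delta>' = \<delta>" "\<epsilon>' = \<epsilon>"
  | w where "cmod w = 1" "w * cnj \<alpha> = \<alpha>" "w * cnj \<beta> = \<beta>"
      "w * cnj \<gamma> = \<gamma>'" "w * cnj \<delta> = \<delta>'" "w * cnj \<epsilon> = \<epsilon>'"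
  | l0 l1 where "Q = P * [:l0, l1:]"
proof -
  have "(P * Qc) * (Pc * Q) = (P * Pc) * (Q * Qc)" by (simp only: ac_simps)
  also have "\<dots> = (P * Rc) * (Pc * R)" by (simp only: norm ac_simps)
  finally have prod: "(P * Qc) * (Pc * Q) = (P * Rc) * (Pc * R)" .
  consider "P * Qc = P * Rc" | "Pc * Q = P * Rc"
    using sum_prod_eq_cases[OF sum prod] by blast
  then show thesis
  proof cases
    case 1
    then have "Qc = Rc" using \<open>P \<noteq> 0\<close> by simp
    then show thesis using that(1) by (simp add: Qc_def Rc_def)
  next
    case 2
    show thesis
    proof (cases "Im (\<alpha> * cnj \<beta>) = 0")
      case True
      then have "cnj \<alpha> * cnj (cnj \<beta>) = \<alpha> * cnj \<beta>"
        by (simp add: complex_eq_iff algebra_simps)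
      then obtain w where w: "cmod w = 1" "w * cnj \<alpha> = \<alpha>" "w * cnj \<beta> = \<beta>"
        using unit_multiple_if_same_gram[of "cnj \<alpha>" \<alpha> "cnj \<beta>" \<beta>] by auto
      then have "P = smult w Pc" by (simp add: P_def Pc_def)
      then have "Pc * Q = Pc * smult w Rc" using 2 by simp
      moreover have "Pc \<noteq> 0" using \<open>P \<noteq> 0\<close> by (auto simp: P_def Pc_def)
      ultimately have "Q = smult w Rc" by (simp only: mult_cancel_left) simp
      then have "\<gamma> = w * cnj \<gamma>'" "\<delta> = w * cnj \<delta>'" "\<epsilon> = w * cnj \<epsilon>'"
        by (simp_all add: Q_def Rc_def)
      then show thesis
        using that(2)[OF w] mult_cnj_eq_1[OF w(1)] by (simp add: mult.assoc[symmetric])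
    next
      case False
      then show thesis
        using 2 that(3) linear_factor_if_conj_mult_eq unfolding P_def Pc_def Q_def Rc_def by blast
    qed
  qed
qed

lemma normalized_representations_equivalent:
  fixes a b c d e c' d' e' :: "real^3"
  assumes a1: "a$1 = 0" and b1: "b$1 = 0"
    and first: "c'$1 = c$1" "d'$1 = d$1" "e'$1 = e$1"
    and f3: "sos_f3 a b c d e = sos_f3 a b c' d' e'" and f4: "sos_f4 c d e = sos_f4 c' d' e'"
    and coprime: "gcd (sos_f3 a b c d e) (4 * sos_f4 c d e - (sos_f2 (axis 1 1) a b c d e)\<^sup>2) = 1"
  obtains T where "orthogonal_matrix T" "T *v axis 1 1 = axis 1 1" "T *v a = a" "T *v b = b"
    "T *v c = c'" "T *v d = d'" "T *v e = e'"
proof -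
  let ?G = "4 * sos_f4 c d e - (sos_f2 (axis 1 1) a b c d e)\<^sup>2"
  have G0: "coeff (coeff ?G 0) 0 = 0"
    by (simp add: sos_defs power2_eq_square bform_mult bform_numeral_mult bform_diff bform_vanish_at_0)
  have "[:cplane a, cplane b:] \<noteq> 0"
  proof
    assume "[:cplane a, cplane b:] = 0"
    then have "a = 0" "b = 0" using a1 b1 by (simp_all add: real3_eq_iff)
    then have "?G dvd sos_f3 a b c d e" by (simp add: sos_f3_def bform3_def)
    then show False using coprime_no_common_factor_vanishing_at_0[OF coprime _ dvd_refl] G0 by blast
  qed
  moreover have "[:cplane a, cplane b:] * [:cnj (cplane c), cnj (cplane d), cnj (cplane e):] +
        [:cnj (cplane a), cnj (cplane b):] * [:cplane c, cplane d, cplane e:] =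
      [:cplane a, cplane b:] * [:cnj (cplane c'), cnj (cplane d'), cnj (cplane e'):] +
        [:cnj (cplane a), cnj (cplane b):] * [:cplane c', cplane d', cplane e':]"
    using f3 unfolding sos_f3_def bform_eq_iff
    by (simp add: inner_real3 a1 b1 complex_eq_iff algebra_simps)
  moreover have "[:cplane c, cplane d, cplane e:] * [:cnj (cplane c), cnj (cplane d), cnj (cplane e):] =
      [:cplane c', cplane d', cplane e':] * [:cnj (cplane c'), cnj (cplane d'), cnj (cplane e'):]"
    using f4 unfolding sos_f4_def bform_eq_iff
    by (simp add: inner_real3 first complex_eq_iff algebra_simps)
  ultimately show thesis
  proof (cases rule: equal_conj_products_cases)
    case 1
    then have "c' = c" "d' = d" "e' = e" using first by (simp_all add: real3_eq_iff)
    then show thesis by (intro that[of "mat 1"]) (simp_all add: orthogonal_matrix_id)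
  next
    case (2 w)
    then show thesis using a1 b1 first
      by (intro that[of "refl_matrix w"])
        (simp_all add: orthogonal_refl_matrix real3_eq_iff refl_matrix_apply)
  next
    case (3 l0 l1)
    then have "bform2 (a \<bullet> a) (2 * (a \<bullet> b)) (b \<bullet> b) dvd sos_f3 a b c d e"
      "bform2 (a \<bullet> a) (2 * (a \<bullet> b)) (b \<bullet> b) dvd ?G"
      using sos_common_factor[OF a1 b1] by simp_all
    then show thesis
      using coprime_no_common_factor_vanishing_at_0[OF coprime] bform_vanish_at_0(1) by blast
  qed
qed

lemma normalizing_orthogonal_maps_exist:
  fixes u a b u' a' b' :: "real^3"
  assumes u: "u \<bullet> u = 1" "u \<bullet> a = 0" "u \<bullet> b = 0"
    and u': "u' \<bullet> u' = 1" "u' \<bullet> a' = 0" "u' \<bullet> b' = 0"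
    and gram: "a' \<bullet> a' = a \<bullet> a" "a' \<bullet> b' = a \<bullet> b" "b' \<bullet> b' = b \<bullet> b"
  obtains S M where "orthogonal_matrix S" "S *v u = axis 1 1"
    "orthogonal_matrix M" "M *v u' = axis 1 1" "M *v a' = S *v a" "M *v b' = S *v b"
proof -
  obtain S where S: "orthogonal_matrix S" "S *v u = axis 1 1"
    using orthogonal_matrix_to_axis u(1) by (metis norm_eq_1)
  obtain S' where S': "orthogonal_matrix S'" "S' *v u' = axis 1 1"
    using orthogonal_matrix_to_axis u'(1) by (metis norm_eq_1)
  obtain R where R: "orthogonal_matrix R" "R *v axis 1 1 = axis 1 1"
    "R *v (S' *v a') = S *v a" "R *v (S' *v b') = S *v b"
    using pairs_orthogonal_to_axis1_congruent[of "S' *v a'" "S' *v b'" "S *v a" "S *v b"] u u' gram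
    by (auto simp: orthogonal_to_axis_component[OF S] orthogonal_to_axis_component[OF S']
        orthogonal_matrix_inner[OF S(1)] orthogonal_matrix_inner[OF S'(1)])
  show thesis
    by (rule that[OF S, of "R ** S'"])
      (use R S' in \<open>simp_all add: orthogonal_matrix_mul flip: matrix_vector_mul_assoc\<close>)
qed

lemma representations_equivalent:
  fixes u a b c d e u' a' b' c' d' e' :: "real^3"
  assumes u: "u \<bullet> u = 1" "u \<bullet> a = 0" "u \<bullet> b = 0"
    and u': "u' \<bullet> u' = 1" "u' \<bullet> a' = 0" "u' \<bullet> b' = 0"
    and xi: "u \<bullet> c = u' \<bullet> c'" "u \<bullet> d = u' \<bullet> d'" "u \<bullet> e = u' \<bullet> e'"
    and f2: "sos_f2 u a b c d e = sos_f2 u' a' b' c' d' e'"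
    and f3: "sos_f3 a b c d e = sos_f3 a' b' c' d' e'"
    and f4: "sos_f4 c d e = sos_f4 c' d' e'"
    and coprime: "gcd (sos_f3 a b c d e) (4 * sos_f4 c d e - (sos_f2 u a b c d e)\<^sup>2) = 1"
  obtains T where "orthogonal_matrix T" "T *v u = u'" "T *v a = a'" "T *v b = b'"
    "T *v c = c'" "T *v d = d'" "T *v e = e'"
proof -
  have "a' \<bullet> a' = a \<bullet> a" "a' \<bullet> b' = a \<bullet> b" "b' \<bullet> b' = b \<bullet> b"
    using f2 xi by (simp_all add: sos_f2_def bform_eq_iff)
  then obtain S M where S: "orthogonal_matrix S" "S *v u = axis 1 1"
    and M: "orthogonal_matrix M" "M *v u' = axis 1 1" "M *v a' = S *v a" "M *v b' = S *v b"
    using normalizing_orthogonal_maps_exist[OF u u'] by blast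
  note first = orthogonal_to_axis_component[OF S] orthogonal_to_axis_component[OF M(1,2)]
  obtain T0 where T0: "orthogonal_matrix T0" "T0 *v axis 1 1 = axis 1 1"
    "T0 *v (S *v a) = S *v a" "T0 *v (S *v b) = S *v b"
    "T0 *v (S *v c) = M *v c'" "T0 *v (S *v d) = M *v d'" "T0 *v (S *v e) = M *v e'"
  proof (rule normalized_representations_equivalent)
    show "(S *v a)$1 = 0" "(S *v b)$1 = 0" using u by (simp_all add: first)
    show "(M *v c')$1 = (S *v c)$1" "(M *v d')$1 = (S *v d)$1" "(M *v e')$1 = (S *v e)$1"
      using xi by (simp_all add: first)
    have "sos_f3 (S *v a) (S *v b) (S *v c) (S *v d) (S *v e) =
        sos_f3 (M *v a') (M *v b') (M *v c') (M *v d') (M *v e')"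
      using f3 by (simp add: sos_orthogonal_invariant S(1) M(1))
    then show "sos_f3 (S *v a) (S *v b) (S *v c) (S *v d) (S *v e) =
        sos_f3 (S *v a) (S *v b) (M *v c') (M *v d') (M *v e')"
      by (simp only: M(3,4))
    show "sos_f4 (S *v c) (S *v d) (S *v e) = sos_f4 (M *v c') (M *v d') (M *v e')"
      using f4 by (simp add: sos_orthogonal_invariant S(1) M(1))
    show "gcd (sos_f3 (S *v a) (S *v b) (S *v c) (S *v d) (S *v e))
        (4 * sos_f4 (S *v c) (S *v d) (S *v e) -
          (sos_f2 (axis 1 1) (S *v a) (S *v b) (S *v c) (S *v d) (S *v e))\<^sup>2) = 1"
      using coprime by (simp flip: S(2) add: sos_orthogonal_invariant S(1))
  qed
  have T: "(transpose M ** T0 ** S) *v x = x'" if "T0 *v (S *v x) = M *v x'" for x x'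
  proof -
    have "(transpose M ** T0 ** S) *v x = transpose M *v (M *v x')"
      by (simp only: that flip: matrix_vector_mul_assoc)
    then show ?thesis by (simp only: orthogonal_matrix_transpose_cancel[OF M(1)])
  qed
  show thesis
  proof (rule that[of "transpose M ** T0 ** S"])
    show "orthogonal_matrix (transpose M ** T0 ** S)"
      using M(1) T0(1) S(1) by (simp add: orthogonal_matrix_mul)
  qed (rule T, simp add: S(2) T0(2-7) M(2-4))+
qed

theorem proposition3p8:
  fixes f2 f3 f4 :: "real poly poly"
    and p p' :: "3 \<Rightarrow> real poly poly poly"
  assumes "hom2 f2 2" and "hom2 f3 3" and "hom2 f4 4"
    and "gcd f3 (4 * f4 - f2 ^ 2) = 1"
    and "\<And>i. hom3 (p i) 2" and "\<And>i. hom3 (p' i) 2"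
    and "(\<Sum>i\<in>UNIV. (p i) ^ 2) = [:f4, f3, f2, 0, 1:]"
    and "(\<Sum>i\<in>UNIV. (p' i) ^ 2) = [:f4, f3, f2, 0, 1:]"
    and "xi p = xi p'"
  shows "orth_equiv p p'"
proof -
  obtain u a b c d e where p: "p = (\<lambda>i. tquad (u$i) (a$i) (b$i) (c$i) (d$i) (e$i))"
    using hom3_2_tquad_vectors assms(5) by blast
  obtain u' a' b' c' d' e' where p': "p' = (\<lambda>i. tquad (u'$i) (a'$i) (b'$i) (c'$i) (d'$i) (e'$i))"
    using hom3_2_tquad_vectors assms(6) by blast
  note sos = sum_tquad_squares_eq_monic_quartic[OF assms(7)[unfolded p]]
  note sos' = sum_tquad_squares_eq_monic_quartic[OF assms(8)[unfolded p']]
  have xi: "u \<bullet> c = u' \<bullet> c'" "u \<bullet> d = u' \<bullet> d'" "u \<bullet> e = u' \<bullet> e'"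
    using assms(9) unfolding p p' xi_tquad[OF sos(1)] xi_tquad[OF sos'(1)]
    by (simp_all add: bform_numeral_mult bform_eq_iff)
  have coprime: "gcd (sos_f3 a b c d e) (4 * sos_f4 c d e - (sos_f2 u a b c d e)\<^sup>2) = 1"
    using assms(4) by (simp add: sos)
  obtain T where T: "orthogonal_matrix T" "T *v u = u'" "T *v a = a'" "T *v b = b'"
    "T *v c = c'" "T *v d = d'" "T *v e = e'"
    by (rule representations_equivalent[OF sos(1-3) sos'(1-3) xi _ _ _ coprime])
      (simp_all flip: sos(4-6) sos'(4-6))
  show ?thesis
    using orth_equiv_tquad[OF T(1), of u a b c d e] unfolding p p' T(2-7) .
qed

end
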